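(* Let $f\in\mathbb{C}[h]$. (1) If $f\notin\mathbb{C}$ (i.e. $f$ is not a constant polynomial), then $\deg(\alpha\beta)=\deg(\alpha)+\deg(\beta)$ (addition in $\mathbb{Z}_+^2$) for all nonzero $\alpha,\beta\in\mathcal{H}(f)$. (2) The algebra $\mathcal{H}(f)$ has no zero-divisors if and only if $f\notin\mathbb{C}$.
   Context: For $f(h)\in\mathbb{C}[h]$, $\mathcal{H}(f)$ is the unital associative $\mathbb{C}$-algebra generated by $x,y,h$ with relations $hx=xf(h)$, $yh=f(h)y$, $yx-xy=f(h)-h$. The elements $x^ih^jy^k$ ($i,j,k\ge 0$) form a basis of $\mathcal{H}(f)$, so every nonzero $\alpha\in\mathcal{H}(f)$ can be uniquely written as $\alpha=x^ng(h)y^m+\sum_{(i,j)<(n,m)}x^ig_{ij}(h)y^j$ with $0\neq g\in\mathbb{C}[h]$, $g_{ij}\in\mathbb{C}[h]$, where $<$ is the lexicographic order on $\mathbb{Z}_+^2$ ($(i,j)>(i',j')$ iff $i>i'$, or $i=i'$ and $j>j'$). Then $\deg\alpha:=(n,m)$. *)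

theory Defs
  imports "HOL-Computational_Algebra.Polynomial" "HOL-Library.Product_Lexorder"
begin

text \<open>We model the algebra H(f) abstractly: a (possibly noncommutative) unital ring 'a
together with a central unital ring homomorphism c from the complex numbers (making 'a a
complex algebra) and elements x, y, h satisfying the defining relations, such that the
monomials x^i h^j y^k form a C-basis. Any such model is isomorphic to H(f).\<close>

definition peval :: "(complex \<Rightarrow> 'a::ring_1) \<Rightarrow> complex poly \<Rightarrow> 'a \<Rightarrow> 'a" where
  "peval c p z = (\<Sum>i\<le>degree p. c (coeff p i) * z ^ i)"

definition mono :: "'a::ring_1 \<Rightarrow> 'a \<Rightarrow> 'a \<Rightarrow> nat \<times> nat \<times> nat \<Rightarrow> 'a" where
  "mono x h y t = (case t of (i, j, k) \<Rightarrow> x ^ i * h ^ j * y ^ k)"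

definition is_rep :: "(complex \<Rightarrow> 'a::ring_1) \<Rightarrow> 'a \<Rightarrow> 'a \<Rightarrow> 'a \<Rightarrow> 'a
    \<Rightarrow> (nat \<times> nat \<times> nat \<Rightarrow> complex) \<Rightarrow> bool" where
  "is_rep c x y h z a \<longleftrightarrow> finite {t. a t \<noteq> 0} \<and>
     z = (\<Sum>t\<in>{t. a t \<noteq> 0}. c (a t) * mono x h y t)"

definition Hf_model :: "complex poly \<Rightarrow> (complex \<Rightarrow> 'a::ring_1) \<Rightarrow> 'a \<Rightarrow> 'a \<Rightarrow> 'a \<Rightarrow> bool" where
  "Hf_model f c x y h \<longleftrightarrow>
     (\<forall>a b. c (a + b) = c a + c b) \<and> (\<forall>a b. c (a * b) = c a * c b) \<and> c 1 = 1 \<and>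
     (\<forall>a z. c a * z = z * c a) \<and>
     h * x = x * peval c f h \<and>
     y * h = peval c f h * y \<and>
     y * x - x * y = peval c f h - h \<and>
     (\<forall>z. \<exists>!a. is_rep c x y h z a)"

definition Hcoef :: "(complex \<Rightarrow> 'a::ring_1) \<Rightarrow> 'a \<Rightarrow> 'a \<Rightarrow> 'a \<Rightarrow> 'a \<Rightarrow> nat \<times> nat \<times> nat \<Rightarrow> complex" where
  "Hcoef c x y h z = (THE a. is_rep c x y h z a)"

text \<open>deg z = lexicographically largest (i,k) such that x^i g(h) y^k occurs with g nonzero.
The order on nat \<times> nat is the lexicographic one (Product_Lexorder).\<close>
definition Hdeg :: "(complex \<Rightarrow> 'a::ring_1) \<Rightarrow> 'a \<Rightarrow> 'a \<Rightarrow> 'a \<Rightarrow> 'a \<Rightarrow> nat \<times> nat" where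
  "Hdeg c x y h z = Max {(i, k). \<exists>j. Hcoef c x y h z (i, j, k) \<noteq> 0}"

end

theory Submission
  imports Defs "HOL-Library.Product_Plus"
begin

text \<open>Moving a
polynomial P(h) past x turns it into (P \<circ> f)(h), and y^k x^l equals x^l y^k up to terms of
x-degree below l. Hence the leading parts multiply as
x^a A(h) y^b \<cdot> x^l B(h) y^m = x^(a+l) (A \<circ> f^l)(B \<circ> f^b)(h) y^(b+m) + (lower terms),
and if f is not constant, composing with f keeps A and B nonzero, so the leading part of the
product is nonzero and degrees add. If f is a constant \<lambda>, then (h - \<lambda>) x = 0.\<close>

instance prod :: (ordered_cancel_ab_semigroup_add, ordered_cancel_ab_semigroup_add)
    ordered_cancel_ab_semigroup_add
  by standard (auto simp: less_eq_prod_def add_strict_left_mono add_left_mono)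

definition pcompose_pow :: "'a::comm_semiring_0 poly \<Rightarrow> 'a poly \<Rightarrow> nat \<Rightarrow> 'a poly" where
  "pcompose_pow P f l = ((\<lambda>q. pcompose q f) ^^ l) P"

lemma pcompose_pow_0 [simp]: "pcompose_pow P f 0 = P"
  by (simp add: pcompose_pow_def)

lemma pcompose_pow_Suc: "pcompose_pow P f (Suc l) = pcompose (pcompose_pow P f l) f"
  by (simp add: pcompose_pow_def)

lemma pcompose_pow_Suc_right: "pcompose_pow P f (Suc l) = pcompose_pow (pcompose P f) f l"
  by (simp add: pcompose_pow_def funpow_Suc_right del: funpow.simps)

lemma pcompose_pow_nonzero:
  fixes P f :: "'a::{comm_semiring_1,semiring_no_zero_divisors} poly"
  assumes "degree f \<noteq> 0" and "P \<noteq> 0"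
  shows "pcompose_pow P f l \<noteq> 0"
  using assms by (induction l) (auto simp: pcompose_pow_Suc dest: pcompose_eq_0)

locale central_scalars =
  fixes c :: "complex \<Rightarrow> 'a::ring_1"
  assumes scalar_add: "c (a + b) = c a + c b"
    and scalar_mult: "c (a * b) = c a * c b"
    and scalar_one: "c 1 = 1"
    and scalar_central: "c a * z = z * c a"
begin

lemma scalar_zero [simp]: "c 0 = 0"
  using scalar_add[of 0 0] by simp

lemma scalar_minus: "c (- a) = - c a"
  using scalar_add[of "- a" a] by (simp add: eq_neg_iff_add_eq_0)

lemma scalar_left_commute: "c a * (z * w) = z * (c a * w)"
  by (metis scalar_central mult.assoc)

lemma scalar_sandwich: "u * (c a * w) * v = c a * (u * w * v)"
  by (metis scalar_central mult.assoc)

lemma peval_eq_sum_lessThan: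
  assumes "degree p < n"
  shows "peval c p z = (\<Sum>i<n. c (coeff p i) * z ^ i)"
  unfolding peval_def lessThan_Suc_atMost[symmetric]
  by (rule sum.mono_neutral_left) (use assms in \<open>auto simp: coeff_eq_0\<close>)

lemma peval_pCons: "peval c (pCons a p) z = c a + z * peval c p z"
proof -
  let ?n = "Suc (degree p)"
  have "peval c (pCons a p) z = (\<Sum>i<Suc ?n. c (coeff (pCons a p) i) * z ^ i)"
    by (rule peval_eq_sum_lessThan) (use degree_pCons_le[of a p] in linarith)
  also have "\<dots> = c a + (\<Sum>i<?n. z * (c (coeff p i) * z ^ i))"
    using scalar_left_commute[of _ z "z ^ _"]
    by (simp add: sum.lessThan_Suc_shift del: sum.lessThan_Suc)
  also have "\<dots> = c a + z * peval c p z"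
    using peval_eq_sum_lessThan[of p ?n z] by (simp only: lessI sum_distrib_left)
  finally show ?thesis .
qed

lemma peval_0 [simp]: "peval c 0 z = 0"
  by (simp add: peval_def)

lemma peval_const [simp]: "peval c [:a:] z = c a"
  by (simp add: peval_pCons)

lemma peval_1 [simp]: "peval c 1 z = 1"
  by (simp add: one_pCons scalar_one del: pCons_one)

lemma peval_add: "peval c (p + q) z = peval c p z + peval c q z"
proof (induction p arbitrary: q rule: pCons_induct)
  case (pCons a p)
  obtain b q' where "q = pCons b q'" by (cases q)
  then show ?case
    using pCons.IH[of q'] by (simp add: peval_pCons scalar_add distrib_left)
qed simp

lemma peval_smult: "peval c (smult a p) z = c a * peval c p z"
  by (induction p rule: pCons_induct)
     (simp_all add: peval_pCons scalar_mult distrib_left scalar_left_commute[of a z])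

lemma peval_mult: "peval c (p * q) z = peval c p z * peval c q z"
  by (induction p rule: pCons_induct)
     (simp_all add: peval_pCons peval_add peval_smult distrib_right mult.assoc)

lemma peval_pcompose: "peval c (pcompose p q) z = peval c p (peval c q z)"
  by (induction p rule: pCons_induct)
     (simp_all add: pcompose_pCons peval_pCons peval_add peval_mult)

lemma peval_monom_1: "peval c (monom 1 j) z = z ^ j"
  by (induction j) (simp_all add: monom_Suc peval_pCons monom_0 scalar_one del: pCons_one)

end

locale Hf_algebra =
  fixes f :: "complex poly" and c :: "complex \<Rightarrow> 'a::ring_1" and x y h :: 'a
  assumes model: "Hf_model f c x y h"
begin

sublocale central_scalars c
  using model unfolding Hf_model_def by unfold_locales blast+

lemma h_x: "h * x = x * peval c f h"
  using model unfolding Hf_model_def by blast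

lemma y_h: "y * h = peval c f h * y"
  using model unfolding Hf_model_def by blast

lemma y_x: "y * x = x * y + (peval c f h - h)"
  using model unfolding Hf_model_def by (simp add: algebra_simps)

lemma unique_rep: "\<exists>!a. is_rep c x y h z a"
  using model unfolding Hf_model_def by blast

abbreviation coord :: "'a \<Rightarrow> nat \<times> nat \<times> nat \<Rightarrow> complex" where
  "coord z \<equiv> Hcoef c x y h z"

abbreviation basis :: "nat \<times> nat \<times> nat \<Rightarrow> 'a" where
  "basis \<equiv> Defs.mono x h y"

lemma is_rep_coord: "is_rep c x y h z (coord z)"
  unfolding Hcoef_def using unique_rep[of z] by (rule theI')

lemma finite_coord_support: "finite {t. coord z t \<noteq> 0}"
  and sum_coord: "z = (\<Sum>t | coord z t \<noteq> 0. c (coord z t) * basis t)"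
  using is_rep_coord[of z] unfolding is_rep_def by auto

lemma sum_coord_superset:
  assumes "finite A" "{t. coord z t \<noteq> 0} \<subseteq> A"
  shows "z = (\<Sum>t\<in>A. c (coord z t) * basis t)"
proof -
  have "(\<Sum>t | coord z t \<noteq> 0. c (coord z t) * basis t) = (\<Sum>t\<in>A. c (coord z t) * basis t)"
    by (rule sum.mono_neutral_left[OF assms]) simp
  with sum_coord[of z] show ?thesis by (rule trans)
qed

lemma coord_eqI:
  assumes "finite A" "{t. a t \<noteq> 0} \<subseteq> A" "z = (\<Sum>t\<in>A. c (a t) * basis t)"
  shows "coord z = a"
proof -
  have "(\<Sum>t\<in>A. c (a t) * basis t) = (\<Sum>t | a t \<noteq> 0. c (a t) * basis t)"
    by (rule sum.mono_neutral_right[OF assms(1,2)]) auto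
  with assms have "is_rep c x y h z a"
    unfolding is_rep_def using finite_subset by auto
  then show ?thesis
    unfolding Hcoef_def by (rule the1_equality[OF unique_rep])
qed

lemma coord_add: "coord (z + w) t = coord z t + coord w t"
proof -
  let ?A = "{t. coord z t \<noteq> 0} \<union> {t. coord w t \<noteq> 0}"
  have "z + w = (\<Sum>t\<in>?A. c (coord z t) * basis t) + (\<Sum>t\<in>?A. c (coord w t) * basis t)"
    by (intro arg_cong2[where f = "(+)"] sum_coord_superset) (auto simp: finite_coord_support)
  also have "\<dots> = (\<Sum>t\<in>?A. c (coord z t + coord w t) * basis t)"
    by (simp add: sum.distrib[symmetric] scalar_add distrib_right)
  finally have "coord (z + w) = (\<lambda>t. coord z t + coord w t)"
    by (rule coord_eqI[rotated 2]) (auto simp: finite_coord_support)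
  then show ?thesis by simp
qed

lemma coord_scalar: "coord (c a * z) t = a * coord z t"
proof -
  have "c a * z = c a * (\<Sum>t | coord z t \<noteq> 0. c (coord z t) * basis t)"
    by (rule arg_cong[OF sum_coord])
  also have "\<dots> = (\<Sum>t | coord z t \<noteq> 0. c (a * coord z t) * basis t)"
    by (simp add: sum_distrib_left scalar_mult mult.assoc)
  finally have "coord (c a * z) = (\<lambda>t. a * coord z t)"
    by (rule coord_eqI[rotated 2]) (auto simp: finite_coord_support)
  then show ?thesis by simp
qed

lemma coord_0 [simp]: "coord 0 t = 0"
  using coord_eqI[of "{}" "\<lambda>_. 0" 0] by simp

lemma coord_basis: "coord (basis s) t = (if t = s then 1 else 0)"
  using coord_eqI[of "{s}" "\<lambda>t. if t = s then 1 else 0" "basis s"] by (simp add: scalar_one)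

lemma coord_uminus: "coord (- z) t = - coord z t"
  using coord_scalar[of "-1" z] by (simp add: scalar_minus scalar_one)

lemma coord_diff: "coord (z - w) t = coord z t - coord w t"
  by (simp only: diff_conv_add_uminus coord_add coord_uminus)

lemma coord_sum:
  "finite S \<Longrightarrow> coord (\<Sum>s\<in>S. c (g s) * F s) t = (\<Sum>s\<in>S. g s * coord (F s) t)"
  by (induction S rule: finite_induct) (simp_all add: coord_add coord_scalar)

lemma coord_eq_0_iff: "(\<forall>t. coord z t = 0) \<longleftrightarrow> z = 0"
proof
  assume "\<forall>t. coord z t = 0"
  then have "{t. coord z t \<noteq> 0} = {}" by simp
  then show "z = 0" using sum_coord[of z] by (simp only: sum.empty)
qed simp

definition supported :: "(nat \<times> nat \<times> nat \<Rightarrow> bool) \<Rightarrow> 'a set" where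
  "supported Q = {z. \<forall>t. coord z t \<noteq> 0 \<longrightarrow> Q t}"

lemma supportedI: "(\<And>t. coord z t \<noteq> 0 \<Longrightarrow> Q t) \<Longrightarrow> z \<in> supported Q"
  unfolding supported_def by blast

lemma supportedD: "z \<in> supported Q \<Longrightarrow> coord z t \<noteq> 0 \<Longrightarrow> Q t"
  unfolding supported_def by blast

lemma supported_0: "0 \<in> supported Q"
  by (rule supportedI) simp

lemma supported_mono: "z \<in> supported Q \<Longrightarrow> (\<And>t. Q t \<Longrightarrow> R t) \<Longrightarrow> z \<in> supported R"
  by (blast intro: supportedI dest: supportedD)

lemma supported_add:
  assumes "z \<in> supported Q" "w \<in> supported Q"
  shows "z + w \<in> supported Q"
proof (rule supportedI)
  fix t
  assume "coord (z + w) t \<noteq> 0"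
  then have "coord z t \<noteq> 0 \<or> coord w t \<noteq> 0" by (auto simp: coord_add)
  then show "Q t" using assms by (auto dest: supportedD)
qed

lemma supported_diff:
  assumes "z \<in> supported Q" "w \<in> supported Q"
  shows "z - w \<in> supported Q"
proof (rule supportedI)
  fix t
  assume "coord (z - w) t \<noteq> 0"
  then have "coord z t \<noteq> 0 \<or> coord w t \<noteq> 0" by (auto simp: coord_diff)
  then show "Q t" using assms by (auto dest: supportedD)
qed

lemma supported_scalar: "z \<in> supported Q \<Longrightarrow> c a * z \<in> supported Q"
  by (rule supportedI) (auto simp: coord_scalar dest: supportedD)

lemma supported_scalar_sum:
  "finite S \<Longrightarrow> (\<And>s. s \<in> S \<Longrightarrow> F s \<in> supported Q)
    \<Longrightarrow> (\<Sum>s\<in>S. c (g s) * F s) \<in> supported Q"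
  by (induction S rule: finite_induct) (auto intro: supported_0 supported_add supported_scalar)

lemma supported_mult_sandwich:
  assumes "z \<in> supported Q" "\<And>t. Q t \<Longrightarrow> u * basis t * v \<in> supported R"
  shows "u * z * v \<in> supported R"
proof -
  have "u * z * v = u * (\<Sum>t | coord z t \<noteq> 0. c (coord z t) * basis t) * v"
    by (rule arg_cong[where f = "\<lambda>w. u * w * v", OF sum_coord])
  also have "\<dots> = (\<Sum>t | coord z t \<noteq> 0. c (coord z t) * (u * basis t * v))"
    by (simp add: sum_distrib_left sum_distrib_right scalar_sandwich)
  also have "\<dots> \<in> supported R"
    using assms by (auto intro!: supported_scalar_sum finite_coord_support dest: supportedD)
  finally show ?thesis .
qed

lemma supported_mult:
  assumes "z \<in> supported Q" "w \<in> supported R"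
    and "\<And>t s. Q t \<Longrightarrow> R s \<Longrightarrow> basis t * basis s \<in> supported S"
  shows "z * w \<in> supported S"
  using supported_mult_sandwich[OF assms(1), of 1 w]
    supported_mult_sandwich[OF assms(2), of "basis _" 1] assms(3)
  by simp

subsection \<open>Normal ordering\<close>

definition xhy :: "nat \<Rightarrow> complex poly \<Rightarrow> nat \<Rightarrow> 'a" where
  "xhy a P b = x ^ a * peval c P h * y ^ b"

lemma basis_eq_xhy: "basis t = xhy (fst t) (monom 1 (fst (snd t))) (snd (snd t))"
  by (cases t) (simp add: mono_def xhy_def peval_monom_1)

lemma coord_xhy:
  "coord (xhy a P b) (i, j, k) = (if i = a \<and> k = b then coeff P j else 0)"
proof -
  have "xhy a P b = (\<Sum>j\<le>degree P. c (coeff P j) * basis (a, j, b))"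
    by (simp add: xhy_def peval_def mono_def sum_distrib_left sum_distrib_right
        scalar_sandwich)
  then show ?thesis
    by (auto simp: coord_sum coord_basis coeff_eq_0 if_distrib cong: if_cong)
qed

lemma xhy_supported: "(\<And>j. Q (a, j, b)) \<Longrightarrow> xhy a P b \<in> supported Q"
  by (auto simp: supported_def coord_xhy)

lemma peval_x: "peval c P h * x = x * peval c (pcompose P f) h"
proof -
  have h_pow_x: "h ^ j * x = x * peval c f h ^ j" for j
  proof (induction j)
    case (Suc j)
    have "h ^ Suc j * x = h * (h ^ j * x)" by (simp add: mult.assoc)
    also have "\<dots> = x * peval c f h ^ Suc j" by (simp add: Suc h_x flip: mult.assoc)
    finally show ?case .
  qed simp
  have "c a * h ^ j * x = x * (c a * peval c f h ^ j)" for a j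
    by (metis scalar_left_commute h_pow_x mult.assoc)
  then have "peval c P h * x = x * peval c P (peval c f h)"
    by (simp add: peval_def sum_distrib_left sum_distrib_right)
  then show ?thesis by (simp add: peval_pcompose)
qed

lemma y_peval: "y * peval c P h = peval c (pcompose P f) h * y"
proof -
  have y_h_pow: "y * h ^ j = peval c f h ^ j * y" for j
  proof (induction j)
    case (Suc j)
    have "y * h ^ Suc j = (y * h) * h ^ j" by (simp add: mult.assoc)
    also have "\<dots> = peval c f h * (y * h ^ j)" by (simp add: y_h mult.assoc)
    also have "\<dots> = peval c f h ^ Suc j * y" by (simp add: Suc mult.assoc)
    finally show ?case .
  qed simp
  have "y * (c a * h ^ j) = c a * peval c f h ^ j * y" for a j
    by (metis scalar_left_commute y_h_pow mult.assoc)
  then have "y * peval c P h = peval c P (peval c f h) * y"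
    by (simp add: peval_def sum_distrib_left sum_distrib_right)
  then show ?thesis by (simp add: peval_pcompose)
qed

lemma peval_x_pow: "peval c P h * (x ^ l * w) = x ^ l * (peval c (pcompose_pow P f l) h * w)"
proof (induction l arbitrary: P)
  case (Suc l)
  have "peval c P h * (x ^ Suc l * w) = (peval c P h * x) * (x ^ l * w)"
    by (simp add: mult.assoc)
  also have "\<dots> = x * (peval c (pcompose P f) h * (x ^ l * w))"
    by (simp add: peval_x mult.assoc)
  also have "\<dots> = x ^ Suc l * (peval c (pcompose_pow P f (Suc l)) h * w)"
    by (simp add: Suc.IH pcompose_pow_Suc_right mult.assoc)
  finally show ?case .
qed simp

lemma y_pow_peval: "y ^ k * (peval c P h * w) = peval c (pcompose_pow P f k) h * (y ^ k * w)"
proof (induction k arbitrary: P w)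
  case (Suc k)
  have "y ^ Suc k * (peval c P h * w) = y ^ k * ((y * peval c P h) * w)"
    by (simp only: power_Suc2 mult.assoc)
  also have "\<dots> = y ^ k * (peval c (pcompose P f) h * (y * w))"
    by (simp add: y_peval mult.assoc)
  also have "\<dots> = peval c (pcompose_pow P f (Suc k)) h * (y ^ Suc k * w)"
    by (simp only: Suc.IH pcompose_pow_Suc_right power_Suc2 mult.assoc)
  finally show ?case .
qed simp

lemma normal_order:
  "x ^ i * peval c P h * x ^ a * peval c S h * y ^ b * peval c Q h * y ^ m
   = xhy (i + a) (pcompose_pow P f a * S * pcompose_pow Q f b) (b + m)"
  by (simp add: xhy_def mult.assoc peval_x_pow y_pow_peval peval_mult power_add)

subsection \<open>Filtration by the degree in x\<close>

abbreviation below_x :: "nat \<Rightarrow> 'a set" where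
  "below_x l \<equiv> supported (\<lambda>t. fst t < l)"

lemma mult_below_x:
  assumes "z \<in> below_x l"
  shows "x ^ i * peval c P h * z * (peval c Q h * y ^ m) \<in> below_x (i + l)"
proof (rule supported_mult_sandwich[OF assms])
  fix t :: "nat \<times> nat \<times> nat"
  assume "fst t < l"
  have "x ^ i * peval c P h * basis t * (peval c Q h * y ^ m)
      = xhy (i + fst t) (pcompose_pow P f (fst t) * monom 1 (fst (snd t))
          * pcompose_pow Q f (snd (snd t))) (snd (snd t) + m)"
    using normal_order[of i P "fst t" "monom 1 (fst (snd t))" "snd (snd t)" Q m]
    by (simp add: basis_eq_xhy xhy_def mult.assoc)
  with \<open>fst t < l\<close>
  show "x ^ i * peval c P h * basis t * (peval c Q h * y ^ m) \<in> below_x (i + l)"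
    by (auto intro!: xhy_supported)
qed

lemma y_x_pow: "\<exists>R \<in> below_x l. y * x ^ l = x ^ l * y + R"
proof (induction l)
  case 0
  show ?case using supported_0 by force
next
  case (Suc l)
  then obtain R where R: "R \<in> below_x l" "y * x ^ l = x ^ l * y + R" by blast
  have "y * x ^ Suc l = (y * x) * x ^ l" by (simp add: mult.assoc)
  also have "\<dots> = x * (y * x ^ l) + (peval c f h * x ^ l - h * x ^ l)"
    by (simp add: y_x algebra_simps)
  also have "\<dots> = x ^ Suc l * y + (x * R + (peval c f h * x ^ l - h * x ^ l))"
    by (simp add: R(2) algebra_simps)
  finally have eq: "y * x ^ Suc l = x ^ Suc l * y + (x * R + (peval c f h * x ^ l - h * x ^ l))" .
  have peval_x_pow_below: "peval c P h * x ^ l \<in> below_x (Suc l)" for P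
  proof -
    have "peval c P h * x ^ l = xhy l (pcompose_pow P f l) 0"
      using peval_x_pow[of P l 1] by (simp add: xhy_def)
    then show ?thesis by (auto intro!: xhy_supported)
  qed
  have "x * R \<in> below_x (Suc l)"
    using mult_below_x[OF R(1), of 1 1 1 0] by simp
  moreover have "peval c f h * x ^ l - h * x ^ l \<in> below_x (Suc l)"
    using peval_x_pow_below[of f] peval_x_pow_below[of "monom 1 1"]
    by (auto simp: peval_monom_1 intro: supported_diff)
  ultimately show ?case using eq by (blast intro: supported_add)
qed

lemma y_mult_below_x:
  assumes "z \<in> below_x l"
  shows "y * z \<in> below_x l"
proof -
  have "y * basis t * 1 \<in> below_x l" if "fst t < l" for t
  proof -
    obtain a j b where t: "t = (a, j, b)" by (cases t)
    obtain R where R: "R \<in> below_x a" "y * x ^ a = x ^ a * y + R" using y_x_pow by blast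
    have "y * basis t * 1 = (y * x ^ a) * (h ^ j * y ^ b)"
      by (simp add: t mono_def mult.assoc)
    also have "\<dots> = x ^ a * (y * peval c (monom 1 j) h) * y ^ b + R * (h ^ j * y ^ b)"
      by (simp add: R(2) peval_monom_1 algebra_simps)
    also have "\<dots> = xhy a (pcompose (monom 1 j) f) (Suc b) + R * (h ^ j * y ^ b)"
      by (simp add: y_peval xhy_def mult.assoc)
    finally show ?thesis
      using that mult_below_x[OF R(1), of 0 1 "monom 1 j" b]
      by (auto simp: t peval_monom_1 intro!: supported_add xhy_supported
          elim!: supported_mono)
  qed
  then show ?thesis
    using supported_mult_sandwich[OF assms, of y 1] by simp
qed

lemma y_pow_x_pow: "\<exists>R \<in> below_x l. y ^ k * x ^ l = x ^ l * y ^ k + R"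
proof (induction k)
  case 0
  show ?case using supported_0 by force
next
  case (Suc k)
  then obtain R where R: "R \<in> below_x l" "y ^ k * x ^ l = x ^ l * y ^ k + R" by blast
  obtain R1 where R1: "R1 \<in> below_x l" "y * x ^ l = x ^ l * y + R1" using y_x_pow by blast
  have "y ^ Suc k * x ^ l = y * (y ^ k * x ^ l)" by (simp add: mult.assoc)
  also have "\<dots> = x ^ l * y ^ Suc k + (R1 * y ^ k + y * R)"
    by (simp add: R(2) distrib_left flip: mult.assoc) (simp add: R1(2) algebra_simps)
  finally show ?case
    using mult_below_x[OF R1(1), of 0 1 1 k] y_mult_below_x[OF R(1)]
    by (auto intro: supported_add)
qed

lemma xhy_mult:
  "\<exists>R \<in> below_x (i + l).
     xhy i P k * xhy l Q m = xhy (i + l) (pcompose_pow P f l * pcompose_pow Q f k) (k + m) + R"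
proof -
  obtain R where R: "R \<in> below_x l" "y ^ k * x ^ l = x ^ l * y ^ k + R"
    using y_pow_x_pow by blast
  have "xhy i P k * xhy l Q m = x ^ i * peval c P h * (y ^ k * x ^ l) * peval c Q h * y ^ m"
    by (simp add: xhy_def mult.assoc)
  also have "\<dots> = x ^ i * peval c P h * x ^ l * peval c 1 h * y ^ k * peval c Q h * y ^ m
      + x ^ i * peval c P h * R * (peval c Q h * y ^ m)"
    by (simp add: R(2) algebra_simps)
  also have "\<dots> = xhy (i + l) (pcompose_pow P f l * pcompose_pow Q f k) (k + m)
      + x ^ i * peval c P h * R * (peval c Q h * y ^ m)"
    by (simp only: normal_order mult_1_right)
  finally show ?thesis using mult_below_x[OF R(1)] by blast
qed

definition xy_deg :: "nat \<times> nat \<times> nat \<Rightarrow> nat \<times> nat" where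
  "xy_deg t = (fst t, snd (snd t))"

lemma xy_deg_simp [simp]: "xy_deg (i, j, k) = (i, k)"
  by (simp add: xy_deg_def)

abbreviation deg_le :: "nat \<times> nat \<Rightarrow> 'a set" where
  "deg_le p \<equiv> supported (\<lambda>t. xy_deg t \<le> p)"

abbreviation deg_less :: "nat \<times> nat \<Rightarrow> 'a set" where
  "deg_less p \<equiv> supported (\<lambda>t. xy_deg t < p)"

lemma basis_mult_deg_le: "basis t * basis s \<in> deg_le (xy_deg t + xy_deg s)"
proof -
  obtain R where R: "R \<in> below_x (fst t + fst s)"
    and eq: "basis t * basis s
      = xhy (fst t + fst s) (pcompose_pow (monom 1 (fst (snd t))) f (fst s)
          * pcompose_pow (monom 1 (fst (snd s))) f (snd (snd t))) (snd (snd t) + snd (snd s)) + R"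
    unfolding basis_eq_xhy by (metis xhy_mult)
  from R have "R \<in> deg_le (xy_deg t + xy_deg s)"
    by (rule supported_mono) (auto simp: xy_deg_def less_eq_prod_def)
  then show ?thesis
    unfolding eq by (rule supported_add[rotated]) (rule xhy_supported, simp add: xy_deg_def)
qed

lemma mult_deg_supported:
  assumes "z \<in> supported (\<lambda>t. P (xy_deg t))" "w \<in> supported (\<lambda>t. Q (xy_deg t))"
    and "\<And>a b d. P a \<Longrightarrow> Q b \<Longrightarrow> d \<le> a + b \<Longrightarrow> S d"
  shows "z * w \<in> supported (\<lambda>t. S (xy_deg t))"
  using assms(1,2)
proof (rule supported_mult)
  fix t s
  assume "P (xy_deg t)" "Q (xy_deg s)"
  with assms(3) show "basis t * basis s \<in> supported (\<lambda>t. S (xy_deg t))"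
    by (blast intro: supported_mono[OF basis_mult_deg_le])
qed

lemma finite_xy_support: "finite {(i, k). \<exists>j. coord z (i, j, k) \<noteq> 0}"
proof -
  have "{(i, k). \<exists>j. coord z (i, j, k) \<noteq> 0} \<subseteq> xy_deg ` {t. coord z t \<noteq> 0}"
    by force
  then show ?thesis using finite_coord_support finite_subset by blast
qed

lemma deg_le_Hdeg: "z \<in> deg_le (Hdeg c x y h z)"
  unfolding supported_def Hdeg_def
  by (force intro: Max_ge[OF finite_xy_support] simp: xy_deg_def)

lemma Hdeg_attained:
  assumes "z \<noteq> 0"
  shows "\<exists>j. coord z (fst (Hdeg c x y h z), j, snd (Hdeg c x y h z)) \<noteq> 0"
proof -
  obtain t where "coord z t \<noteq> 0" using assms coord_eq_0_iff by blast
  then have "{(i, k). \<exists>j. coord z (i, j, k) \<noteq> 0} \<noteq> {}" by (cases t) auto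
  from Max_in[OF finite_xy_support this] show ?thesis
    unfolding Hdeg_def by auto
qed

lemma Hdeg_eqI: "z \<in> deg_le p \<Longrightarrow> coord z (fst p, j, snd p) \<noteq> 0 \<Longrightarrow> Hdeg c x y h z = p"
  unfolding Hdeg_def
  by (rule Max_eqI[OF finite_xy_support]) (auto dest: supportedD)

lemma leading_part:
  assumes "z \<noteq> 0"
  obtains A where "A \<noteq> 0"
    and "z - xhy (fst (Hdeg c x y h z)) A (snd (Hdeg c x y h z)) \<in> deg_less (Hdeg c x y h z)"
proof -
  define p where "p = Hdeg c x y h z"
  define J where "J = {j. coord z (fst p, j, snd p) \<noteq> 0}"
  have "J \<subseteq> (\<lambda>t. fst (snd t)) ` {t. coord z t \<noteq> 0}"
    unfolding J_def by force
  then have "finite J" using finite_coord_support finite_subset by blast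
  define A where "A = (\<Sum>j\<in>J. monom (coord z (fst p, j, snd p)) j)"
  have coeff_A: "coeff A j = coord z (fst p, j, snd p)" for j
    using \<open>finite J\<close> by (auto simp: A_def coeff_sum coeff_monom J_def)
  have "A \<noteq> 0"
    using Hdeg_attained[OF assms] coeff_A by (fastforce simp: p_def)
  moreover have "z - xhy (fst p) A (snd p) \<in> deg_less p"
  proof (rule supportedI)
    fix t
    assume ne: "coord (z - xhy (fst p) A (snd p)) t \<noteq> 0"
    obtain i j k where t: "t = (i, j, k)" by (cases t)
    show "xy_deg t < p"
    proof (cases "(i, k) = p")
      case True
      then show ?thesis using ne by (auto simp: coord_diff coord_xhy t coeff_A)
    next
      case False
      then have "coord z t \<noteq> 0"
        using ne by (cases p) (auto simp: coord_diff coord_xhy t)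
      with False show ?thesis
        using supportedD[OF deg_le_Hdeg] by (fastforce simp: t p_def)
    qed
  qed
  ultimately show ?thesis using that p_def by blast
qed

lemma Hdeg_eq_if_leading_part:
  assumes "A \<noteq> 0" and "z - xhy (fst p) A (snd p) \<in> deg_less p"
  shows "Hdeg c x y h z = p" and "z \<noteq> 0"
proof -
  define r where "r = z - xhy (fst p) A (snd p)"
  have z: "z = xhy (fst p) A (snd p) + r" and r: "r \<in> deg_less p"
    using assms(2) by (simp_all add: r_def)
  obtain j where "coeff A j \<noteq> 0" using assms(1) leading_coeff_neq_0 by blast
  moreover have "coord r (fst p, j, snd p) = 0"
    using supportedD[OF r, of "(fst p, j, snd p)"] by auto
  ultimately have coord_z: "coord z (fst p, j, snd p) \<noteq> 0"
    by (simp add: z coord_add coord_xhy)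
  have "xhy (fst p) A (snd p) \<in> deg_le p" by (rule xhy_supported) simp
  moreover have "r \<in> deg_le p" using r by (rule supported_mono) simp
  ultimately have "z \<in> deg_le p" unfolding z by (rule supported_add)
  then show "Hdeg c x y h z = p" using coord_z by (rule Hdeg_eqI)
  show "z \<noteq> 0" using coord_z by auto
qed

lemma leading_part_mult:
  assumes \<alpha>: "\<alpha> - xhy (fst p) A (snd p) \<in> deg_less p"
    and \<beta>: "\<beta> - xhy (fst q) B (snd q) \<in> deg_less q"
  shows "\<alpha> * \<beta> - xhy (fst (p + q)) (pcompose_pow A f (fst q) * pcompose_pow B f (snd p))
      (snd (p + q)) \<in> deg_less (p + q)"
proof -
  define a where "a = xhy (fst p) A (snd p)"
  define b where "b = xhy (fst q) B (snd q)"
  define e where "e = xhy (fst (p + q)) (pcompose_pow A f (fst q) * pcompose_pow B f (snd p))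
      (snd (p + q))"
  obtain R where R: "R \<in> below_x (fst p + fst q)" and ab: "a * b = e + R"
    unfolding a_def b_def e_def fst_add snd_add using xhy_mult by blast
  have a: "a \<in> deg_le p" and b: "b \<in> deg_le q"
    unfolding a_def b_def by (rule xhy_supported, simp)+
  have "\<beta> - b \<in> deg_le q"
    using \<beta>[folded b_def] by (rule supported_mono) (rule less_imp_le)
  with b have "b + (\<beta> - b) \<in> deg_le q" by (rule supported_add)
  then have \<beta>_le: "\<beta> \<in> deg_le q" by simp
  have "R \<in> deg_less (p + q)"
    using R by (rule supported_mono) (auto simp: xy_deg_def less_prod_def)
  moreover have "a * (\<beta> - b) \<in> deg_less (p + q)"
    using a \<beta>[folded b_def]
    by (rule mult_deg_supported) (erule order.strict_trans1, erule (1) add_le_less_mono)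
  moreover have "(\<alpha> - a) * \<beta> \<in> deg_less (p + q)"
    using \<alpha>[folded a_def] \<beta>_le
    by (rule mult_deg_supported) (erule order.strict_trans1, erule (1) add_less_le_mono)
  ultimately have "R + a * (\<beta> - b) + (\<alpha> - a) * \<beta> \<in> deg_less (p + q)"
    by (intro supported_add)
  moreover have "R + a * (\<beta> - b) + (\<alpha> - a) * \<beta> = \<alpha> * \<beta> - e"
    using ab by (simp add: algebra_simps)
  ultimately show ?thesis by (simp add: e_def)
qed

theorem Hdeg_mult:
  assumes "degree f \<noteq> 0" and "\<alpha> \<noteq> 0" and "\<beta> \<noteq> 0"
  shows "Hdeg c x y h (\<alpha> * \<beta>) = Hdeg c x y h \<alpha> + Hdeg c x y h \<beta>" and "\<alpha> * \<beta> \<noteq> 0"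
proof -
  obtain A where "A \<noteq> 0" and A: "\<alpha> - xhy (fst (Hdeg c x y h \<alpha>)) A (snd (Hdeg c x y h \<alpha>))
      \<in> deg_less (Hdeg c x y h \<alpha>)"
    using leading_part[OF assms(2)] by blast
  obtain B where "B \<noteq> 0" and B: "\<beta> - xhy (fst (Hdeg c x y h \<beta>)) B (snd (Hdeg c x y h \<beta>))
      \<in> deg_less (Hdeg c x y h \<beta>)"
    using leading_part[OF assms(3)] by blast
  have "pcompose_pow A f (fst (Hdeg c x y h \<beta>)) * pcompose_pow B f (snd (Hdeg c x y h \<alpha>)) \<noteq> 0"
    using pcompose_pow_nonzero[OF assms(1)] \<open>A \<noteq> 0\<close> \<open>B \<noteq> 0\<close> by simp
  from Hdeg_eq_if_leading_part[OF this leading_part_mult[OF A B]]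
  show "Hdeg c x y h (\<alpha> * \<beta>) = Hdeg c x y h \<alpha> + Hdeg c x y h \<beta>" and "\<alpha> * \<beta> \<noteq> 0"
    by simp_all
qed

lemma zero_divisor_if_constant:
  assumes "degree f = 0"
  shows "(h - c (coeff f 0)) * x = 0" and "h - c (coeff f 0) \<noteq> 0" and "x \<noteq> 0"
proof -
  have "peval c f h = c (coeff f 0)" using assms by (simp add: peval_def)
  then show "(h - c (coeff f 0)) * x = 0"
    by (simp add: h_x algebra_simps scalar_central)
  have "coord (basis (0, 1, 0) - c (coeff f 0) * basis (0, 0, 0)) (0, 1, 0) = 1"
    by (simp add: coord_diff coord_scalar coord_basis)
  then have "coord (h - c (coeff f 0)) (0, 1, 0) = 1" by (simp add: mono_def)
  then show "h - c (coeff f 0) \<noteq> 0" by (metis coord_0 zero_neq_one)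
  have "coord (basis (1, 0, 0)) (1, 0, 0) = 1" by (simp add: coord_basis)
  then have "coord x (1, 0, 0) = 1" by (simp add: mono_def)
  then show "x \<noteq> 0" by (metis coord_0 zero_neq_one)
qed

end

theorem lemma2:
  fixes f :: "complex poly" and c :: "complex \<Rightarrow> 'a::ring_1" and x y h :: 'a
  assumes "Hf_model f c x y h"
  shows "(degree f \<noteq> 0 \<longrightarrow>
            (\<forall>\<alpha> \<beta>. \<alpha> \<noteq> 0 \<longrightarrow> \<beta> \<noteq> 0 \<longrightarrow>
               Hdeg c x y h (\<alpha> * \<beta>) =
                 (fst (Hdeg c x y h \<alpha>) + fst (Hdeg c x y h \<beta>),
                  snd (Hdeg c x y h \<alpha>) + snd (Hdeg c x y h \<beta>))))
         \<and> ((\<forall>\<alpha> \<beta> :: 'a. \<alpha> * \<beta> = 0 \<longrightarrow> \<alpha> = 0 \<or> \<beta> = 0) \<longleftrightarrow> degree f \<noteq> 0)"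
proof -
  interpret Hf_algebra f c x y h by unfold_locales (rule assms)
  have "Hdeg c x y h (\<alpha> * \<beta>) = (fst (Hdeg c x y h \<alpha>) + fst (Hdeg c x y h \<beta>),
      snd (Hdeg c x y h \<alpha>) + snd (Hdeg c x y h \<beta>))"
    if "degree f \<noteq> 0" "\<alpha> \<noteq> 0" "\<beta> \<noteq> 0" for \<alpha> \<beta>
    using Hdeg_mult(1)[OF that] by (simp add: plus_prod_def)
  moreover have "(\<forall>\<alpha> \<beta> :: 'a. \<alpha> * \<beta> = 0 \<longrightarrow> \<alpha> = 0 \<or> \<beta> = 0) \<longleftrightarrow> degree f \<noteq> 0"
    using Hdeg_mult(2) zero_divisor_if_constant by blast
  ultimately show ?thesis by blast
qed

end
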